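(* Let $\mathbf X=\{X_i\}_{i\in\mathbb Z}$ be a stationary strongly mixing process on a finite alphabet with $0<\mathcal H_1(\mathbf X)<\infty$, whose strong mixing coefficients satisfy $\sum_{s=0}^\infty d(s)<\infty$, and which is aperiodic in the sense that $\mathcal R(\mathbf X):=\sup_{s\in\mathbb N_+}\mathbb P[X_1=X_{1+s}]<1$. Let $\beta>0$, $\ell=\beta\log n$, and $\eta>0$. Then \[ \sup_{1\le s\le\ell}\ \max_{\frac{1+\eta}{\mathcal H_1(\mathbf X)}\log n\le t\le\beta\log n}\mathbb P\!\left[X_1^t=X_{1+s}^{t+s}\right]=o\!\left(\frac1{\log n}\right)\quad(n\to\infty), \] with constants depending on $p_{\min}:=\min_{x\in\mathrm{supp}(P_{X_1})}P_{X_1}(x)$.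
   Context: Logarithms are to base $|\mathcal X|$. Strong mixing coefficient: $d(s):=\sup\{|\mathbb P[\mathcal F\mid\mathcal E]-\mathbb P[\mathcal F]|: i\in\mathbb Z,\ \mathcal E\in\sigma(X_{-\infty}^i),\ \mathcal F\in\sigma(X_{i+s}^\infty)\}$, taken w.l.o.g. non-increasing in $s$; $\mathbf X$ is strongly mixing if $d(s)\to0$. $\mathcal H_1(\mathbf X)=\lim_{t\to\infty}\frac{1}{2t+1}H_1(P_{X_{-t}^t})$ is the Shannon entropy rate (assumed to exist). $X_1^t=X_{1+s}^{t+s}$ means $X_i=X_{i+s}$ for all $i\in[t]$. *)

theory Defs
  imports "HOL-Probability.Probability"
begin

text \<open>A process is a family X :: int => 'a => 'x of random variables on a probability
space M with values in a finite alphabet 'x. Logarithms are to base |'x| = CARD('x).\<close>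

definition stationary_process :: "'a measure \<Rightarrow> (int \<Rightarrow> 'a \<Rightarrow> 'x) \<Rightarrow> bool" where
  "stationary_process M X \<longleftrightarrow>
     (\<forall>k::int. distr M (PiM UNIV (\<lambda>_. count_space UNIV)) (\<lambda>\<omega> i. X (i + k) \<omega>)
             = distr M (PiM UNIV (\<lambda>_. count_space UNIV)) (\<lambda>\<omega> i. X i \<omega>))"

definition past_events :: "'a measure \<Rightarrow> (int \<Rightarrow> 'a \<Rightarrow> 'x) \<Rightarrow> int \<Rightarrow> 'a set set" where
  "past_events M X i = sigma_sets (space M) (\<Union>j\<in>{..i}. {X j -` A \<inter> space M | A. True})"

definition future_events :: "'a measure \<Rightarrow> (int \<Rightarrow> 'a \<Rightarrow> 'x) \<Rightarrow> int \<Rightarrow> 'a set set" where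
  "future_events M X i = sigma_sets (space M) (\<Union>j\<in>{i..}. {X j -` A \<inter> space M | A. True})"

definition mixing_coeff :: "'a measure \<Rightarrow> (int \<Rightarrow> 'a \<Rightarrow> 'x) \<Rightarrow> nat \<Rightarrow> real" where
  "mixing_coeff M X s = Sup {\<bar>measure M (F \<inter> E) / measure M E - measure M F\<bar> | i E F.
       E \<in> past_events M X i \<and> F \<in> future_events M X (i + int s) \<and> measure M E > 0}"

definition block_entropy :: "'a measure \<Rightarrow> (int \<Rightarrow> 'a \<Rightarrow> 'x::finite) \<Rightarrow> nat \<Rightarrow> real" where
  "block_entropy M X t = - (\<Sum>w\<in>PiE {- int t .. int t} (\<lambda>_. UNIV).
      let p = measure M {\<omega> \<in> space M. \<forall>j\<in>{- int t .. int t}. X j \<omega> = w j}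
      in p * log (real CARD('x)) p)"

definition recurrence_coeff :: "'a measure \<Rightarrow> (int \<Rightarrow> 'a \<Rightarrow> 'x) \<Rightarrow> real" where
  "recurrence_coeff M X = Sup {measure M {\<omega> \<in> space M. X 1 \<omega> = X (1 + int s) \<omega>} | s::nat. s \<ge> 1}"

definition shift_match_prob :: "'a measure \<Rightarrow> (int \<Rightarrow> 'a \<Rightarrow> 'x) \<Rightarrow> nat \<Rightarrow> nat \<Rightarrow> real" where
  "shift_match_prob M X s t = measure M {\<omega> \<in> space M. \<forall>i\<in>{1 .. int t}. X i \<omega> = X (i + int s) \<omega>}"

end

theory Submission
  imports Defs
begin

text \<open>Cut the block \<open>X\<^sub>1 \<dots> X\<^sub>t\<close> into windows separated by gaps of length \<open>g\<close>: by strong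
  mixing, events depending on such windows multiply up to an additive error \<open>d(g)\<close> per window.
  For a shift \<open>s < 2g\<close>, a match forces about \<open>t / 3g\<close> separated coincidences \<open>X\<^sub>j = X\<^sub>j\<^sub>+\<^sub>s\<close>,
  each of probability at most \<open>R(X)\<close>. For a larger shift, choose probe positions \<open>J\<close> at distance
  at least \<open>g\<close> from each other and from \<open>J + s\<close>; a match makes \<open>X\<close> repeat on \<open>J + s\<close> its pattern
  on \<open>J\<close>, which costs about \<open>p ^ |J|\<close> for the largest marginal probability \<open>p\<close>, and \<open>p < 1\<close>
  because \<open>R(X) < 1\<close>. With \<open>g\<close> the integer cube root of \<open>t\<close>, both bounds are \<open>q ^ (g div 4)\<close> for
  a fixed \<open>q < 1\<close>, hence \<open>o(1/t)\<close>, and \<open>t \<ge> (1 + \<eta>) log n / H\<close>. So only \<open>d(s) \<rightarrow> 0\<close>,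
  \<open>R(X) < 1\<close> and \<open>H > 0\<close> are used.\<close>

lemma le_power_smaller_exponent:
  fixes x b :: real
  assumes "x \<le> b ^ m" "n \<le> m" "0 \<le> b" "x \<le> 1"
  shows "x \<le> b ^ n"
proof (cases "b \<le> 1")
  case True
  then show ?thesis using assms power_decreasing[of n m b] by linarith
next
  case False
  then show ?thesis using assms(4) one_le_power[of b n] by linarith
qed

lemma tendsto_cube_mult_power:
  fixes q :: real
  assumes "0 < q" "q < 1"
  shows "(\<lambda>n. real n ^ 3 * q ^ n) \<longlonglongrightarrow> 0"
proof -
  define r where "r = root 3 q"
  have "(\<lambda>n. (real n * r ^ n) ^ 3) \<longlonglongrightarrow> 0 ^ 3"
    using assms by (intro tendsto_power powser_times_n_limit_0) (simp add: r_def)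
  moreover have "r ^ 3 = q" using assms by (simp add: r_def)
  then have "(real n * r ^ n) ^ 3 = real n ^ 3 * q ^ n" for n
    by (metis power_mult_distrib power_mult mult.commute)
  ultimately show ?thesis by simp
qed

lemma tendsto_cube_mult_power_div_4:
  fixes q :: real
  assumes "0 < q" "q < 1"
  shows "(\<lambda>k. real (k + 1) ^ 3 * q ^ (k div 4)) \<longlonglongrightarrow> 0"
proof -
  have "(\<lambda>m. real (Suc m) ^ 3 * q ^ Suc m / q) \<longlonglongrightarrow> 0"
    using tendsto_cube_mult_power[OF assms] by (intro tendsto_divide_zero LIMSEQ_Suc)
  then have "(\<lambda>m. real (m + 1) ^ 3 * q ^ m) \<longlonglongrightarrow> 0" using assms(1) by simp
  then have lim: "(\<lambda>k. 64 * (real (k div 4 + 1) ^ 3 * q ^ (k div 4))) \<longlonglongrightarrow> 0"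
    by (intro tendsto_mult_right_zero filterlim_compose[OF _ filterlim_at_top_div_const_nat]) auto
  have bound: "real (k + 1) ^ 3 * q ^ (k div 4) \<le> 64 * (real (k div 4 + 1) ^ 3 * q ^ (k div 4))" for k
  proof -
    have "k + 1 \<le> 4 * (k div 4 + 1)" by simp
    then have "real (k + 1) \<le> 4 * real (k div 4 + 1)" by (metis of_nat_le_iff of_nat_mult of_nat_numeral)
    then have "real (k + 1) ^ 3 * q ^ (k div 4) \<le> (4 * real (k div 4 + 1)) ^ 3 * q ^ (k div 4)"
      using assms(1) by (intro mult_right_mono power_mono) auto
    also have "(4 * real (k div 4 + 1)) ^ 3 = 64 * real (k div 4 + 1) ^ 3"
      by (simp only: power_mult_distrib) simp
    finally show ?thesis by (simp only: mult.assoc)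
  qed
  show ?thesis
  proof (rule tendsto_sandwich[OF _ _ tendsto_const lim])
    show "\<forall>\<^sub>F k in sequentially. 0 \<le> real (k + 1) ^ 3 * q ^ (k div 4)" using assms(1) by simp
    show "\<forall>\<^sub>F k in sequentially. real (k + 1) ^ 3 * q ^ (k div 4) \<le> 64 * (real (k div 4 + 1) ^ 3 * q ^ (k div 4))"
      using bound by simp
  qed
qed

lemma floor_cube_root_nat:
  obtains k :: nat where "k ^ 3 \<le> t" "t < (k + 1) ^ 3"
proof -
  have "y < t + 1" if "y ^ 3 \<le> t" for y :: nat
  proof -
    have "y \<le> y ^ 3" by (cases y) (auto simp: power3_eq_cube)
    with that show ?thesis by simp
  qed
  then obtain k where k: "k ^ 3 \<le> t" and greatest: "\<And>y. y ^ 3 \<le> t \<Longrightarrow> y \<le> k"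
    using ex_has_greatest_nat[of "\<lambda>k. k ^ 3 \<le> t" 0 "\<lambda>y. y" "t + 1"] by auto
  moreover have "t < (k + 1) ^ 3"
  proof (rule ccontr)
    assume "\<not> t < (k + 1) ^ 3"
    with greatest have "k + 1 \<le> k" by (simp only: not_less)
    then show False by simp
  qed
  ultimately show thesis using that k by blast
qed

lemma eventually_le_divide_log:
  fixes f :: "'i \<Rightarrow> nat \<Rightarrow> real" and b c :: real
  assumes "1 < b" "0 < c"
    and decay: "\<And>e. 0 < e \<Longrightarrow> \<exists>T. \<forall>t\<ge>T. \<forall>i\<in>I. f i t \<le> e / real t"
  shows "\<forall>\<epsilon>>0. \<forall>\<^sub>F n in sequentially. \<forall>i\<in>I. \<forall>t. c * log b (real n) \<le> real t \<longrightarrow> f i t \<le> \<epsilon> / log b (real n)"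
proof (intro allI impI)
  fix \<epsilon> :: real assume "0 < \<epsilon>"
  then obtain T where T: "\<And>t i. T \<le> t \<Longrightarrow> i \<in> I \<Longrightarrow> f i t \<le> \<epsilon> * c / real t"
    using decay[of "\<epsilon> * c"] \<open>0 < c\<close> by auto
  have "c * log b x = ln x * (c / ln b)" for x by (simp add: log_def)
  moreover have "filterlim (\<lambda>n. ln (real n) * (c / ln b)) at_top sequentially"
    using assms(1,2)
    by (intro filterlim_at_top_mult_tendsto_pos[OF tendsto_const] filterlim_compose[OF ln_at_top filterlim_real_sequentially]) auto
  ultimately have "\<forall>\<^sub>F n in sequentially. real T + 1 \<le> c * log b (real n)"
    by (simp add: filterlim_at_top)
  then show "\<forall>\<^sub>F n in sequentially. \<forall>i\<in>I. \<forall>t. c * log b (real n) \<le> real t \<longrightarrow> f i t \<le> \<epsilon> / log b (real n)"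
  proof (rule eventually_mono, intro ballI allI impI)
    fix n i t assume n: "real T + 1 \<le> c * log b (real n)" and "i \<in> I" and t: "c * log b (real n) \<le> real t"
    then have "f i t \<le> \<epsilon> * c / real t" by (intro T) auto
    moreover have "0 < c * log b (real n)" using n of_nat_0_le_iff[of T] by linarith
    ultimately have "f i t \<le> \<epsilon> * c / (c * log b (real n))"
      using t \<open>0 < \<epsilon>\<close> \<open>0 < c\<close> by (smt (verit) divide_left_mono mult_pos_pos)
    also have "\<dots> = \<epsilon> / log b (real n)" using \<open>0 < c\<close> by simp
    finally show "f i t \<le> \<epsilon> / log b (real n)" .
  qed
qed

section \<open>Strong mixing\<close>

locale finite_process = prob_space M for M :: "'a measure" +
  fixes X :: "int \<Rightarrow> 'a \<Rightarrow> 'x::finite"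
  assumes measurable_X: "\<And>i. X i \<in> measurable M (count_space UNIV)"
begin

abbreviation d :: "nat \<Rightarrow> real" where
  "d \<equiv> mixing_coeff M X"

lemma generators_subset_sets: "(\<Union>j\<in>J. {X j -` A \<inter> space M | A. True}) \<subseteq> sets M"
  using measurable_X by (auto intro!: measurable_sets)

lemma sigma_algebra_past_events: "sigma_algebra (space M) (past_events M X i)"
  unfolding past_events_def by (rule sigma_algebra_sigma_sets) auto

lemma sigma_algebra_future_events: "sigma_algebra (space M) (future_events M X i)"
  unfolding future_events_def by (rule sigma_algebra_sigma_sets) auto

lemma past_events_subset_sets: "past_events M X i \<subseteq> sets M"
  unfolding past_events_def by (rule sets.sigma_sets_subset[OF generators_subset_sets])

lemma future_events_subset_sets: "future_events M X i \<subseteq> sets M"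
  unfolding future_events_def by (rule sets.sigma_sets_subset[OF generators_subset_sets])

lemma past_events_mono: "i \<le> j \<Longrightarrow> past_events M X i \<subseteq> past_events M X j"
  unfolding past_events_def by (rule sigma_sets_mono') (blast intro: order_trans)

lemma future_events_mono: "j \<le> i \<Longrightarrow> future_events M X i \<subseteq> future_events M X j"
  unfolding future_events_def by (rule sigma_sets_mono') (blast intro: order_trans)

lemma value_event_past: "{\<omega> \<in> space M. X q \<omega> = x} \<in> past_events M X q"
proof -
  have "{\<omega> \<in> space M. X q \<omega> = x} = X q -` {x} \<inter> space M" by auto
  then show ?thesis unfolding past_events_def by auto
qed

lemma value_event_future: "{\<omega> \<in> space M. X q \<omega> = x} \<in> future_events M X q"
proof -
  have "{\<omega> \<in> space M. X q \<omega> = x} = X q -` {x} \<inter> space M" by auto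
  then show ?thesis unfolding future_events_def by auto
qed

lemma value_event_sets: "{\<omega> \<in> space M. X q \<omega> = x} \<in> sets M"
  using value_event_past past_events_subset_sets by auto

lemma coincidence_event_eq:
  "{\<omega> \<in> space M. X j \<omega> = X k \<omega>} = (\<Union>x. {\<omega> \<in> space M. X j \<omega> = x} \<inter> {\<omega> \<in> space M. X k \<omega> = x})"
  by auto

lemma coincidence_event_past:
  assumes "j \<le> i" "k \<le> i"
  shows "{\<omega> \<in> space M. X j \<omega> = X k \<omega>} \<in> past_events M X i"
proof -
  interpret sigma_algebra "space M" "past_events M X i" by (rule sigma_algebra_past_events)
  show ?thesis unfolding coincidence_event_eq
    using past_events_mono[OF assms(1)] past_events_mono[OF assms(2)] value_event_past
    by (intro finite_UN Int) auto
qed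

lemma coincidence_event_future:
  assumes "i \<le> j" "i \<le> k"
  shows "{\<omega> \<in> space M. X j \<omega> = X k \<omega>} \<in> future_events M X i"
proof -
  interpret sigma_algebra "space M" "future_events M X i" by (rule sigma_algebra_future_events)
  show ?thesis unfolding coincidence_event_eq
    using future_events_mono[OF assms(1)] future_events_mono[OF assms(2)] value_event_future
    by (intro finite_UN Int) auto
qed

lemma coincidence_event_sets: "{\<omega> \<in> space M. X j \<omega> = X k \<omega>} \<in> sets M"
  using coincidence_event_past[of j "max j k" k] past_events_subset_sets by auto

lemma bdd_above_mixing_ratios:
  "bdd_above {\<bar>measure M (F \<inter> E) / measure M E - measure M F\<bar> | i E F.
     E \<in> past_events M X i \<and> F \<in> future_events M X (i + int s) \<and> measure M E > 0}"
proof (rule bdd_aboveI[where M=1], clarify)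
  fix i E F
  assume E: "E \<in> past_events M X i" "measure M E > 0" and F: "F \<in> future_events M X (i + int s)"
  then have "measure M (F \<inter> E) \<le> measure M E"
    using past_events_subset_sets by (intro finite_measure_mono) auto
  then have "measure M (F \<inter> E) / measure M E \<le> 1" using E(2) by simp
  moreover have "0 \<le> measure M (F \<inter> E) / measure M E" by simp
  ultimately show "\<bar>measure M (F \<inter> E) / measure M E - measure M F\<bar> \<le> 1"
    using measure_nonneg[of M F] prob_le_1[of F] by linarith
qed

lemma mixing_coeff_nonneg: "0 \<le> d s"
proof -
  have "space M \<in> past_events M X 0" "space M \<in> future_events M X (0 + int s)"
    unfolding past_events_def future_events_def by (rule sigma_sets_top)+
  then have "\<bar>measure M (space M \<inter> space M) / measure M (space M) - measure M (space M)\<bar> \<le> d s"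
    unfolding mixing_coeff_def
    by (intro cSup_upper[OF _ bdd_above_mixing_ratios] CollectI exI conjI refl) (auto simp: prob_space)
  then show ?thesis by (meson abs_ge_zero order_trans)
qed

lemma measure_Int_le_mixing:
  assumes E: "E \<in> past_events M X i" and F: "F \<in> future_events M X (i + int s)"
  shows "measure M (F \<inter> E) \<le> measure M E * (measure M F + d s)"
proof (cases "measure M E > 0")
  case True
  have "\<bar>measure M (F \<inter> E) / measure M E - measure M F\<bar> \<le> d s"
    unfolding mixing_coeff_def
    by (intro cSup_upper[OF _ bdd_above_mixing_ratios] CollectI exI conjI refl) (use E F True in auto)
  with True show ?thesis by (simp add: field_simps)
next
  case False
  then have "measure M E = 0" using measure_nonneg[of M E] by linarith
  moreover have "measure M (F \<inter> E) \<le> measure M E"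
    using E past_events_subset_sets by (intro finite_measure_mono) auto
  ultimately show ?thesis by simp
qed

text \<open>The hypotheses \<open>past\<close> and \<open>future\<close> say that \<open>P k\<close> depends only on the window \<open>X\<^sub>k \<dots> X\<^sub>k\<^sub>+\<^sub>L\<close>.\<close>
lemma measure_Collect_All_le_prod_mixing:
  assumes "finite K"
    and past: "\<And>k. k \<in> K \<Longrightarrow> {\<omega> \<in> space M. P k \<omega>} \<in> past_events M X (k + L)"
    and future: "\<And>k. k \<in> K \<Longrightarrow> {\<omega> \<in> space M. P k \<omega>} \<in> future_events M X k"
    and gap: "\<And>k k'. k \<in> K \<Longrightarrow> k' \<in> K \<Longrightarrow> k < k' \<Longrightarrow> k + L + int g \<le> k'"
  shows "measure M {\<omega> \<in> space M. \<forall>k\<in>K. P k \<omega>} \<le> (\<Prod>k\<in>K. measure M {\<omega> \<in> space M. P k \<omega>} + d g)"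
  using assms(1) past future gap
proof (induction K rule: finite_linorder_max_induct)
  case empty
  then show ?case by simp
next
  case (insert b A)
  let ?E = "{\<omega> \<in> space M. \<forall>k\<in>A. P k \<omega>}" and ?F = "{\<omega> \<in> space M. P b \<omega>}"
  interpret sigma_algebra "space M" "past_events M X (b - int g)"
    by (rule sigma_algebra_past_events)
  have "{\<omega> \<in> space M. P a \<omega>} \<in> past_events M X (b - int g)" if "a \<in> A" for a
    using past_events_mono[of "a + L" "b - int g"] insert.prems(1)[of a]
      insert.prems(3)[of a b] insert.hyps(2) that by auto
  then have E: "?E \<in> past_events M X (b - int g)"
    using insert.hyps(1) by (intro sets_Collect_finite_All)
  have F: "?F \<in> future_events M X (b - int g + int g)"
    using insert.prems(2)[of b] by simp
  have "{\<omega> \<in> space M. \<forall>k\<in>insert b A. P k \<omega>} = ?F \<inter> ?E" by auto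
  then have "measure M {\<omega> \<in> space M. \<forall>k\<in>insert b A. P k \<omega>} = measure M (?F \<inter> ?E)" by simp
  also have "\<dots> \<le> measure M ?E * (measure M ?F + d g)"
    by (rule measure_Int_le_mixing[OF E F])
  also have "\<dots> \<le> (\<Prod>k\<in>A. measure M {\<omega> \<in> space M. P k \<omega>} + d g) * (measure M ?F + d g)"
    using insert.IH insert.prems mixing_coeff_nonneg[of g] by (intro mult_right_mono) auto
  also have "\<dots> = (\<Prod>k\<in>insert b A. measure M {\<omega> \<in> space M. P k \<omega>} + d g)"
    using insert.hyps by (subgoal_tac "b \<notin> A") (auto simp: mult.commute)
  finally show ?case .
qed

end

section \<open>Stationary processes and their marginals\<close>

lemma stationary_process_measure_shift:
  fixes X :: "int \<Rightarrow> 'a \<Rightarrow> 'x"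
  assumes "stationary_process M X" "\<And>i. X i \<in> measurable M (count_space UNIV)"
    and "S \<in> sets (PiM UNIV (\<lambda>_. count_space UNIV))"
  shows "measure M {\<omega> \<in> space M. (\<lambda>i. X (i + k) \<omega>) \<in> S} = measure M {\<omega> \<in> space M. (\<lambda>i. X i \<omega>) \<in> S}"
proof -
  have shifted: "(\<lambda>\<omega> i. X (i + k) \<omega>) \<in> measurable M (PiM UNIV (\<lambda>_. count_space UNIV))"
    and unshifted: "(\<lambda>\<omega> i. X i \<omega>) \<in> measurable M (PiM UNIV (\<lambda>_. count_space UNIV))"
    by (auto intro!: measurable_PiM_single' simp: assms(2))
  have "measure (distr M (PiM UNIV (\<lambda>_. count_space UNIV)) (\<lambda>\<omega> i. X (i + k) \<omega>)) S
      = measure (distr M (PiM UNIV (\<lambda>_. count_space UNIV)) (\<lambda>\<omega> i. X i \<omega>)) S"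
    using assms(1) unfolding stationary_process_def by metis
  then show ?thesis using measure_distr[OF shifted assms(3)] measure_distr[OF unshifted assms(3)]
    by (simp add: vimage_def Int_def conj_commute)
qed

locale stationary_finite_process = finite_process M X
  for M :: "'a measure" and X :: "int \<Rightarrow> 'a \<Rightarrow> 'x::finite" +
  assumes stationary: "stationary_process M X"
begin

definition marginal :: "'x \<Rightarrow> real" where
  "marginal x = measure M {\<omega> \<in> space M. X 1 \<omega> = x}"

definition max_marginal :: real where
  "max_marginal = Max (range marginal)"

lemma measure_value_event: "measure M {\<omega> \<in> space M. X q \<omega> = x} = marginal x"
proof -
  have "{f \<in> space (PiM UNIV (\<lambda>_. count_space UNIV)). f 1 = x} \<in> sets (PiM UNIV (\<lambda>_. count_space UNIV))"
    by measurable
  from stationary_process_measure_shift[OF stationary measurable_X this, of "q - 1"]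
  show ?thesis by (simp add: marginal_def space_PiM)
qed

lemma measure_coincidence_event:
  "measure M {\<omega> \<in> space M. X j \<omega> = X (j + s) \<omega>} = measure M {\<omega> \<in> space M. X 1 \<omega> = X (1 + s) \<omega>}"
proof -
  have "{f \<in> space (PiM UNIV (\<lambda>_. count_space (UNIV :: 'x set))). f 1 = f (1 + s)} \<in> sets (PiM UNIV (\<lambda>_. count_space UNIV))"
    by measurable
  from stationary_process_measure_shift[OF stationary measurable_X this, of "j - 1"]
  show ?thesis by (simp add: space_PiM add_ac)
qed

lemma coincidence_le_recurrence_coeff:
  assumes "1 \<le> s"
  shows "measure M {\<omega> \<in> space M. X j \<omega> = X (j + int s) \<omega>} \<le> recurrence_coeff M X"
  unfolding measure_coincidence_event[of j] recurrence_coeff_def using assms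
  by (intro cSup_upper bdd_aboveI[where M=1]) auto

lemma recurrence_coeff_nonneg: "0 \<le> recurrence_coeff M X"
  using coincidence_le_recurrence_coeff[of 1 0] measure_nonneg order_trans by blast

lemma sum_marginal: "(\<Sum>x\<in>UNIV. marginal x) = 1"
proof -
  have "(\<Sum>x\<in>UNIV. marginal x) = measure M (\<Union>x. {\<omega> \<in> space M. X 1 \<omega> = x})"
    unfolding marginal_def
    by (rule finite_measure_finite_Union[symmetric]) (auto simp: value_event_sets disjoint_family_on_def)
  also have "(\<Union>x. {\<omega> \<in> space M. X 1 \<omega> = x}) = space M" by auto
  finally show ?thesis by (simp add: prob_space)
qed

lemma max_marginal_nonneg: "0 \<le> max_marginal"
  unfolding max_marginal_def by (rule order_trans[OF _ Max_ge[of _ "marginal undefined"]]) (auto simp: marginal_def)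

lemma marginal_le_max_marginal: "marginal x \<le> max_marginal"
  unfolding max_marginal_def by (rule Max_ge) auto

text \<open>A symbol of probability one would make \<open>X\<^sub>1 = X\<^sub>2\<close> almost sure.\<close>
lemma max_marginal_less_one:
  assumes "recurrence_coeff M X < 1"
  shows "max_marginal < 1"
proof -
  have "marginal x < 1" for x
  proof (rule ccontr)
    assume "\<not> marginal x < 1"
    then have "marginal x = 1"
      using prob_le_1[of "{\<omega> \<in> space M. X 1 \<omega> = x}"] unfolding marginal_def by linarith
    then have "prob {\<omega> \<in> space M. X i \<omega> = x} = 1" for i
      using measure_value_event[of i x] by simp
    then have "AE \<omega> in M. X i \<omega> = x" for i
      using prob_eq_1[OF value_event_sets] by auto
    from this[of 1] this[of "1 + int 1"] have "AE \<omega> in M. X 1 \<omega> = X (1 + int 1) \<omega>"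
      by eventually_elim simp
    then have "prob {\<omega> \<in> space M. X 1 \<omega> = X (1 + int 1) \<omega>} = 1"
      using prob_eq_1[OF coincidence_event_sets] by auto
    with coincidence_le_recurrence_coeff[of 1 1] assms show False by simp
  qed
  then show ?thesis unfolding max_marginal_def by (subst Max_less_iff) auto
qed

section \<open>Bounds on the match probability\<close>

lemma shift_match_prob_le_1: "shift_match_prob M X s t \<le> 1"
  unfolding shift_match_prob_def by (rule prob_le_1)

lemma measure_values_le_prod_marginal:
  assumes "finite Q" and gap: "\<And>q q'. q \<in> Q \<Longrightarrow> q' \<in> Q \<Longrightarrow> q < q' \<Longrightarrow> q + int g \<le> q'"
  shows "measure M {\<omega> \<in> space M. \<forall>q\<in>Q. X q \<omega> = u q} \<le> (\<Prod>q\<in>Q. marginal (u q) + d g)"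
  using measure_Collect_All_le_prod_mixing[of Q "\<lambda>q \<omega>. X q \<omega> = u q" 0 g] assms
    value_event_past value_event_future
  by (simp add: measure_value_event)

lemma shift_match_prob_le_recurrence_power:
  assumes "1 \<le> s" "m * (s + g) \<le> t"
  shows "shift_match_prob M X s t \<le> (recurrence_coeff M X + d g) ^ m"
proof -
  define key where "key a = 1 + int a * int (s + g)" for a :: nat
  define K where "K = key ` {..<m}"
  have "strict_mono key"
    using assms(1) by (intro strict_monoI) (simp add: key_def)
  then have inj: "inj_on key {..<m}" by (rule strict_mono_imp_inj_on)
  have gap: "k + int s + int g \<le> k'" if kk': "k \<in> K" "k' \<in> K" "k < k'" for k k'
  proof -
    obtain a a' where "k = key a" "k' = key a'" using kk'(1,2) unfolding K_def by blast
    with \<open>strict_mono key\<close> \<open>k < k'\<close> have "int a + 1 \<le> int a'" by (simp add: strict_mono_less)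
    then have "(int a + 1) * int (s + g) \<le> int a' * int (s + g)" by (intro mult_right_mono) auto
    with \<open>k = key a\<close> \<open>k' = key a'\<close> show ?thesis by (simp add: key_def algebra_simps)
  qed
  have K_range: "K \<subseteq> {1..int t}"
  proof
    fix k assume "k \<in> K"
    then obtain a where "a < m" "k = key a" unfolding K_def by blast
    then have "(a + 1) * (s + g) \<le> t" using assms(2) mult_le_mono1[of "a + 1" m "s + g"] by simp
    then have "a * (s + g) + 1 \<le> t" using assms(1) by (simp add: algebra_simps)
    then have "int a * int (s + g) + 1 \<le> int t"
      by (metis of_nat_1 of_nat_add of_nat_le_iff of_nat_mult)
    then show "k \<in> {1..int t}" using \<open>k = key a\<close> by (simp add: key_def)
  qed
  then have "{\<omega> \<in> space M. \<forall>i\<in>{1..int t}. X i \<omega> = X (i + int s) \<omega>}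
      \<subseteq> {\<omega> \<in> space M. \<forall>k\<in>K. X k \<omega> = X (k + int s) \<omega>}" by blast
  moreover have "{\<omega> \<in> space M. \<forall>k\<in>K. X k \<omega> = X (k + int s) \<omega>} \<in> sets M"
    by (intro sets.sets_Collect_finite_All coincidence_event_sets) (simp add: K_def)
  ultimately have "shift_match_prob M X s t \<le> measure M {\<omega> \<in> space M. \<forall>k\<in>K. X k \<omega> = X (k + int s) \<omega>}"
    unfolding shift_match_prob_def by (rule finite_measure_mono)
  also have "\<dots> \<le> (\<Prod>k\<in>K. measure M {\<omega> \<in> space M. X k \<omega> = X (k + int s) \<omega>} + d g)"
    using gap by (intro measure_Collect_All_le_prod_mixing[where L="int s"])
      (auto simp: K_def intro!: coincidence_event_past coincidence_event_future)
  also have "\<dots> \<le> (\<Prod>k\<in>K. recurrence_coeff M X + d g)"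
    using coincidence_le_recurrence_coeff[OF assms(1)] mixing_coeff_nonneg[of g]
    by (intro prod_mono conjI add_mono add_nonneg_nonneg measure_nonneg) auto
  also have "\<dots> = (recurrence_coeff M X + d g) ^ m"
    using card_image[OF inj] by (simp add: K_def)
  finally show ?thesis .
qed

lemma measure_repeated_pattern_le:
  assumes "finite J" "J \<inter> (\<lambda>p. p + int s) ` J = {}"
    and gap: "\<And>q q'. q \<in> J \<union> (\<lambda>p. p + int s) ` J \<Longrightarrow> q' \<in> J \<union> (\<lambda>p. p + int s) ` J \<Longrightarrow> q < q'
      \<Longrightarrow> q + int g \<le> q'"
  shows "measure M {\<omega> \<in> space M. \<forall>p\<in>J. X p \<omega> = w p \<and> X (p + int s) \<omega> = w p}
    \<le> (\<Prod>p\<in>J. marginal (w p) + d g) * (max_marginal + d g) ^ card J"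
proof -
  define sh where "sh p = p + int s" for p
  define u where "u q = (if q \<in> J then w q else w (q - int s))" for q
  have shifted_notin: "sh p \<notin> J" if "p \<in> J" for p
    using assms(2) that by (auto simp: sh_def)
  have "(\<forall>p\<in>J. X p \<omega> = w p \<and> X (p + int s) \<omega> = w p) \<longleftrightarrow> (\<forall>q\<in>J \<union> sh ` J. X q \<omega> = u q)" for \<omega>
  proof
    assume "\<forall>q\<in>J \<union> sh ` J. X q \<omega> = u q"
    then show "\<forall>p\<in>J. X p \<omega> = w p \<and> X (p + int s) \<omega> = w p"
      using shifted_notin by (metis UnI1 UnI2 image_eqI u_def sh_def add_diff_cancel_right')
  qed (use shifted_notin in \<open>auto simp: u_def sh_def\<close>)
  then have "{\<omega> \<in> space M. \<forall>p\<in>J. X p \<omega> = w p \<and> X (p + int s) \<omega> = w p}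
      = {\<omega> \<in> space M. \<forall>q\<in>J \<union> sh ` J. X q \<omega> = u q}" by simp
  also have "measure M \<dots> \<le> (\<Prod>q\<in>J \<union> sh ` J. marginal (u q) + d g)"
    using assms(1) gap by (intro measure_values_le_prod_marginal) (auto simp: sh_def)
  also have "\<dots> = (\<Prod>p\<in>J. marginal (w p) + d g) * (\<Prod>p\<in>J. marginal (u (sh p)) + d g)"
    using assms(1,2) inj_on_def[of sh J]
    by (simp add: prod.union_disjoint prod.reindex u_def sh_def)
  also have "\<dots> \<le> (\<Prod>p\<in>J. marginal (w p) + d g) * (max_marginal + d g) ^ card J"
    using marginal_le_max_marginal mixing_coeff_nonneg[of g]
    by (intro mult_left_mono prod_nonneg)
      (auto simp: marginal_def intro!: prod_mono[where g="\<lambda>_. max_marginal + d g", simplified])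
  finally show ?thesis .
qed

definition pattern_rate :: "nat \<Rightarrow> real" where
  "pattern_rate g = (\<Sum>x\<in>UNIV. marginal x + d g) * (max_marginal + d g)"

text \<open>A match repeats on \<open>J + s\<close> the pattern that \<open>X\<close> shows on \<open>J\<close>; summing the bound for a fixed
  pattern over all patterns turns \<open>\<Prod>p\<in>J. marginal (w p) + d g\<close> into \<open>(\<Sum>x. marginal x + d g) ^ card J\<close>.\<close>
lemma shift_match_prob_le_pattern_rate_power:
  assumes "finite J" "J \<subseteq> {1..int t}" "1 \<le> g"
    and sep: "\<And>p p'. p \<in> J \<Longrightarrow> p' \<in> J \<Longrightarrow> p \<noteq> p' \<Longrightarrow> int g \<le> \<bar>p - p'\<bar>"
    and sep_shift: "\<And>p p'. p \<in> J \<Longrightarrow> p' \<in> J \<Longrightarrow> int g \<le> \<bar>p + int s - p'\<bar>"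
  shows "shift_match_prob M X s t \<le> pattern_rate g ^ card J"
proof -
  define W where "W = PiE J (\<lambda>_. UNIV :: 'x set)"
  define E where "E w = {\<omega> \<in> space M. \<forall>p\<in>J. X p \<omega> = w p \<and> X (p + int s) \<omega> = w p}" for w
  have disj: "J \<inter> (\<lambda>p. p + int s) ` J = {}"
    using sep_shift \<open>1 \<le> g\<close> by fastforce
  have gap: "q + int g \<le> q'"
    if q: "q \<in> J \<union> (\<lambda>p. p + int s) ` J" "q' \<in> J \<union> (\<lambda>p. p + int s) ` J" "q < q'" for q q'
    using q(1,2)
  proof (elim UnE imageE)
    show "q \<in> J \<Longrightarrow> q' \<in> J \<Longrightarrow> ?thesis" using sep[of q q'] q(3) by simp
    show "q \<in> J \<Longrightarrow> q' = p + int s \<Longrightarrow> p \<in> J \<Longrightarrow> ?thesis" for p using sep_shift[of p q] q(3) by simp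
    show "q = p + int s \<Longrightarrow> p \<in> J \<Longrightarrow> q' \<in> J \<Longrightarrow> ?thesis" for p using sep_shift[of p q'] q(3) by simp
    show "q = p + int s \<Longrightarrow> p \<in> J \<Longrightarrow> q' = p' + int s \<Longrightarrow> p' \<in> J \<Longrightarrow> ?thesis" for p p'
      using sep[of p p'] q(3) by simp
  qed
  have "finite W" using \<open>finite J\<close> by (simp add: W_def finite_PiE)
  have E_sets: "E w \<in> sets M" for w
    unfolding E_def using \<open>finite J\<close> by (intro sets.sets_Collect_finite_All sets.sets_Collect_conj value_event_sets)
  have "{\<omega> \<in> space M. \<forall>i\<in>{1..int t}. X i \<omega> = X (i + int s) \<omega>} \<subseteq> (\<Union>w\<in>W. E w)"
  proof
    fix \<omega> assume "\<omega> \<in> {\<omega> \<in> space M. \<forall>i\<in>{1..int t}. X i \<omega> = X (i + int s) \<omega>}"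
    then have "\<omega> \<in> E (restrict (\<lambda>p. X p \<omega>) J)" using assms(2) by (auto simp: E_def)
    then show "\<omega> \<in> (\<Union>w\<in>W. E w)" by (auto simp: W_def)
  qed
  then have "shift_match_prob M X s t \<le> measure M (\<Union>w\<in>W. E w)"
    unfolding shift_match_prob_def using \<open>finite W\<close> E_sets
    by (intro finite_measure_mono sets.finite_UN) auto
  also have "\<dots> \<le> (\<Sum>w\<in>W. measure M (E w))"
    using \<open>finite W\<close> E_sets by (intro finite_measure_subadditive_finite) auto
  also have "\<dots> \<le> (\<Sum>w\<in>W. (\<Prod>p\<in>J. marginal (w p) + d g) * (max_marginal + d g) ^ card J)"
    unfolding E_def using \<open>finite J\<close> disj gap by (intro sum_mono measure_repeated_pattern_le)
  also have "\<dots> = (\<Sum>w\<in>W. \<Prod>p\<in>J. marginal (w p) + d g) * (max_marginal + d g) ^ card J"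
    by (simp add: sum_distrib_right)
  also have "(\<Sum>w\<in>W. \<Prod>p\<in>J. marginal (w p) + d g) = (\<Prod>p\<in>J. \<Sum>x\<in>UNIV. marginal x + d g)"
    unfolding W_def using \<open>finite J\<close> by (intro prod_sum_PiE[symmetric]) auto
  also have "(\<Prod>p\<in>J. \<Sum>x\<in>UNIV. marginal x + d g) * (max_marginal + d g) ^ card J = pattern_rate g ^ card J"
    by (simp add: pattern_rate_def power_mult_distrib)
  finally show ?thesis .
qed

lemma shift_match_prob_le_progression:
  assumes "1 \<le> g" "g \<le> a" "I * a \<le> t"
    and sep_shift: "\<And>i i'. i < I \<Longrightarrow> i' < I \<Longrightarrow> int g \<le> \<bar>int i * int a + int s - int i' * int a\<bar>"
  shows "shift_match_prob M X s t \<le> pattern_rate g ^ I"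
proof -
  define f where "f i = 1 + int i * int a" for i :: nat
  have "0 < int a" using assms(1,2) by simp
  then have "inj_on f {..<I}" by (auto intro!: inj_onI simp: f_def)
  then have "card (f ` {..<I}) = I" by (simp add: card_image)
  moreover have "f ` {..<I} \<subseteq> {1..int t}"
  proof
    fix p assume "p \<in> f ` {..<I}"
    then obtain i where "i < I" "p = f i" by blast
    then have "(i + 1) * a \<le> t" using assms(3) mult_le_mono1[of "i + 1" I a] by simp
    then have "i * a + 1 \<le> t" using assms(1,2) by simp
    then have "int i * int a + 1 \<le> int t" by (metis of_nat_1 of_nat_add of_nat_le_iff of_nat_mult)
    then show "p \<in> {1..int t}" using \<open>p = f i\<close> by (simp add: f_def)
  qed
  moreover have "int g \<le> \<bar>p - p'\<bar>" if pp': "p \<in> f ` {..<I}" "p' \<in> f ` {..<I}" "p \<noteq> p'" for p p'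
  proof -
    obtain i i' where "p = f i" "p' = f i'" using pp'(1,2) by blast
    then have "i \<noteq> i'" using \<open>p \<noteq> p'\<close> by auto
    then have "1 \<le> \<bar>int i - int i'\<bar>" by simp
    then have "1 * int a \<le> \<bar>int i - int i'\<bar> * int a" by (intro mult_right_mono) auto
    moreover have "\<bar>p - p'\<bar> = \<bar>int i - int i'\<bar> * int a"
      using \<open>p = f i\<close> \<open>p' = f i'\<close> by (simp add: f_def abs_mult flip: left_diff_distrib)
    ultimately show ?thesis using assms(2) by simp
  qed
  moreover have "int g \<le> \<bar>p + int s - p'\<bar>" if "p \<in> f ` {..<I}" "p' \<in> f ` {..<I}" for p p'
    using that sep_shift by (force simp: f_def algebra_simps)
  ultimately show ?thesis
    using shift_match_prob_le_pattern_rate_power[of "f ` {..<I}" t g s] assms(1) by simp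
qed

lemma pattern_rate_nonneg: "0 \<le> pattern_rate g"
  unfolding pattern_rate_def using max_marginal_nonneg mixing_coeff_nonneg[of g]
  by (intro mult_nonneg_nonneg sum_nonneg add_nonneg_nonneg) (auto simp: marginal_def)

lemma shift_match_prob_small_shift:
  assumes "1 \<le> k" "k ^ 3 \<le> t" "1 \<le> s" "s < 2 * k"
  shows "shift_match_prob M X s t \<le> (recurrence_coeff M X + d k) ^ (k div 4)"
proof (rule le_power_smaller_exponent)
  define m where "m = t div (3 * k)"
  have "m * (s + k) \<le> m * (3 * k)" using assms(4) by simp
  also have "\<dots> \<le> t" unfolding m_def by (rule div_times_less_eq_dividend)
  finally show "shift_match_prob M X s t \<le> (recurrence_coeff M X + d k) ^ m"
    by (rule shift_match_prob_le_recurrence_power[OF assms(3)])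
  have "k div 4 * (3 * k) \<le> k div 4 * 4 * k" by simp
  also have "\<dots> \<le> k * k" by (intro mult_le_mono1) simp
  also have "\<dots> \<le> t" using assms(1,2) power_increasing[of 2 3 k] by (simp add: power2_eq_square)
  finally show "k div 4 \<le> m" unfolding m_def using assms(1) by (simp add: less_eq_div_iff_mult_less_eq)
qed (use recurrence_coeff_nonneg mixing_coeff_nonneg shift_match_prob_le_1 in auto)

text \<open>Probe the positions \<open>1, 1 + 2s, 1 + 4s, \<dots>\<close>: each shifted copy lies halfway between two probes.\<close>
lemma shift_match_prob_medium_shift:
  assumes "1 \<le> k" "k ^ 3 \<le> t" "2 * k \<le> s" "s \<le> k ^ 2"
  shows "shift_match_prob M X s t \<le> pattern_rate k ^ (k div 4)"
proof (rule le_power_smaller_exponent)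
  define I where "I = t div (2 * s)"
  have "int k \<le> \<bar>int i * int (2 * s) + int s - int i' * int (2 * s)\<bar>" for i i'
  proof -
    have "int i * int (2 * s) + int s - int i' * int (2 * s) = (2 * (int i - int i') + 1) * int s"
      by (simp add: algebra_simps)
    moreover have "1 \<le> \<bar>2 * (int i - int i') + 1\<bar>" by arith
    then have "1 * int s \<le> \<bar>2 * (int i - int i') + 1\<bar> * int s" by (intro mult_right_mono) auto
    ultimately show ?thesis using assms(3) by (simp add: abs_mult)
  qed
  then show "shift_match_prob M X s t \<le> pattern_rate k ^ I"
    using assms(1,3) by (intro shift_match_prob_le_progression[where a="2 * s"])
      (auto simp: I_def div_times_less_eq_dividend)
  have "k div 4 * (2 * s) \<le> k div 4 * 4 * s" by simp
  also have "\<dots> \<le> k * k ^ 2" using assms(4) by (intro mult_le_mono) simp_all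
  also have "\<dots> \<le> t" using assms(2) by (simp add: power3_eq_cube power2_eq_square)
  finally show "k div 4 \<le> I" unfolding I_def using assms(1,3) by (simp add: less_eq_div_iff_mult_less_eq)
qed (use pattern_rate_nonneg shift_match_prob_le_1 in auto)

text \<open>Probe the positions \<open>1, 1 + k, 1 + 2k, \<dots>\<close> up to \<open>s/2\<close>: all shifted copies lie beyond the probes.\<close>
lemma shift_match_prob_large_shift:
  assumes "1 \<le> k" "k ^ 3 \<le> t" "k ^ 2 \<le> s"
  shows "shift_match_prob M X s t \<le> pattern_rate k ^ (k div 4)"
proof (rule le_power_smaller_exponent)
  define I where "I = min t s div (2 * k)"
  have I: "I * (2 * k) \<le> min t s" unfolding I_def by (rule div_times_less_eq_dividend)
  have "int k \<le> \<bar>int i * int k + int s - int i' * int k\<bar>" if "i' < I" for i i'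
  proof -
    have "int i' * int k + int k \<le> int I * int k"
      using mult_le_mono1[of "i' + 1" I k] that by (simp add: algebra_simps flip: of_nat_mult of_nat_add)
    moreover have "2 * (int I * int k) \<le> int s" using I by (simp flip: of_nat_mult)
    moreover have "0 \<le> int i * int k" by simp
    ultimately show ?thesis by linarith
  qed
  moreover have "I * k \<le> t" using I by (simp add: algebra_simps)
  ultimately show "shift_match_prob M X s t \<le> pattern_rate k ^ I"
    using assms(1) by (intro shift_match_prob_le_progression[where a=k]) auto
  have "k div 4 * (2 * k) \<le> k div 4 * 4 * k" by simp
  also have "\<dots> \<le> k * k" by (intro mult_le_mono1) simp
  also have "\<dots> \<le> min t s"
    using assms power_increasing[of 2 3 k] by (simp add: power2_eq_square)
  finally show "k div 4 \<le> I" unfolding I_def using assms(1) by (simp add: less_eq_div_iff_mult_less_eq)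
qed (use pattern_rate_nonneg shift_match_prob_le_1 in auto)

lemma shift_match_prob_le_cube_root_power:
  assumes "1 \<le> k" "k ^ 3 \<le> t" "1 \<le> s"
    and "recurrence_coeff M X + d k \<le> q" "pattern_rate k \<le> q"
  shows "shift_match_prob M X s t \<le> q ^ (k div 4)"
proof -
  consider "s < 2 * k" | "2 * k \<le> s" "s \<le> k ^ 2" | "k ^ 2 \<le> s" by linarith
  then show ?thesis
  proof cases
    case 1
    then have "shift_match_prob M X s t \<le> (recurrence_coeff M X + d k) ^ (k div 4)"
      using assms(1-3) by (intro shift_match_prob_small_shift)
    also have "\<dots> \<le> q ^ (k div 4)"
      using assms(4) recurrence_coeff_nonneg mixing_coeff_nonneg[of k] by (intro power_mono) auto
    finally show ?thesis .
  next
    case 2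
    then have "shift_match_prob M X s t \<le> pattern_rate k ^ (k div 4)"
      using assms(1,2) by (intro shift_match_prob_medium_shift)
    also have "\<dots> \<le> q ^ (k div 4)" using assms(5) pattern_rate_nonneg by (intro power_mono)
    finally show ?thesis .
  next
    case 3
    then have "shift_match_prob M X s t \<le> pattern_rate k ^ (k div 4)"
      using assms(1,2) by (intro shift_match_prob_large_shift)
    also have "\<dots> \<le> q ^ (k div 4)" using assms(5) pattern_rate_nonneg by (intro power_mono)
    finally show ?thesis .
  qed
qed

lemma eventually_rates_below:
  assumes "recurrence_coeff M X < 1" "d \<longlonglongrightarrow> 0"
  obtains q where "0 < q" "q < 1"
    "\<forall>\<^sub>F k in sequentially. recurrence_coeff M X + d k < q \<and> pattern_rate k < q"
proof
  define q where "q = (1 + max (recurrence_coeff M X) max_marginal) / 2"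
  show q: "0 < q" "q < 1"
    using assms(1) max_marginal_less_one[OF assms(1)] recurrence_coeff_nonneg by (auto simp: q_def)
  have "(\<lambda>k. recurrence_coeff M X + d k) \<longlonglongrightarrow> recurrence_coeff M X + 0"
    using assms(2) by (intro tendsto_intros)
  then have "\<forall>\<^sub>F k in sequentially. recurrence_coeff M X + d k < q"
    using assms(1) by (rule_tac order_tendstoD(2)) (auto simp: q_def)
  moreover have "(\<lambda>k. pattern_rate k) \<longlonglongrightarrow> (\<Sum>x\<in>UNIV. marginal x + 0) * (max_marginal + 0)"
    unfolding pattern_rate_def using assms(2) by (intro tendsto_intros)
  then have "\<forall>\<^sub>F k in sequentially. pattern_rate k < q"
    using max_marginal_less_one[OF assms(1)]
    by (rule_tac order_tendstoD(2)) (auto simp: sum_marginal q_def)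
  ultimately show "\<forall>\<^sub>F k in sequentially. recurrence_coeff M X + d k < q \<and> pattern_rate k < q"
    by (rule eventually_conj)
qed

lemma shift_match_prob_le_eventually:
  assumes "recurrence_coeff M X < 1" "d \<longlonglongrightarrow> 0" "0 < e"
  shows "\<exists>T. \<forall>t\<ge>T. \<forall>s\<ge>1. shift_match_prob M X s t \<le> e / real t"
proof -
  obtain q where q: "0 < q" "q < 1"
    and rates: "\<forall>\<^sub>F k in sequentially. recurrence_coeff M X + d k < q \<and> pattern_rate k < q"
    using eventually_rates_below[OF assms(1,2)] by blast
  have "\<forall>\<^sub>F k in sequentially. real (k + 1) ^ 3 * q ^ (k div 4) < e"
    using tendsto_cube_mult_power_div_4[OF q] assms(3) by (intro order_tendstoD(2)) auto
  with rates eventually_ge_at_top[of 1] obtain K where K: "\<And>k. K \<le> k \<Longrightarrow>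
      recurrence_coeff M X + d k < q \<and> pattern_rate k < q \<and> real (k + 1) ^ 3 * q ^ (k div 4) < e \<and> 1 \<le> k"
    unfolding eventually_sequentially by (metis le_trans nat_le_linear)
  have "shift_match_prob M X s t \<le> e / real t" if "K ^ 3 \<le> t" "1 \<le> s" for s t
  proof -
    obtain k where k: "k ^ 3 \<le> t" "t < (k + 1) ^ 3" by (rule floor_cube_root_nat)
    have "K ^ 3 < (k + 1) ^ 3" using k(2) that(1) by linarith
    then have "K < k + 1" by (rule power_less_imp_less_base) simp
    then have Kk: "recurrence_coeff M X + d k < q" "pattern_rate k < q"
      "real (k + 1) ^ 3 * q ^ (k div 4) < e" "1 \<le> k"
      using K[of k] by auto
    have "shift_match_prob M X s t \<le> q ^ (k div 4)"
      using Kk k(1) that(2) by (intro shift_match_prob_le_cube_root_power) auto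
    also have "\<dots> \<le> e / real ((k + 1) ^ 3)"
      using Kk(3) by (simp add: field_simps)
    also have "\<dots> \<le> e / real t"
    proof (rule divide_left_mono)
      have "1 \<le> t" using k(1) Kk(4) by (metis le_trans one_le_power)
      then show "0 < real ((k + 1) ^ 3) * real t" by simp
      show "real t \<le> real ((k + 1) ^ 3)" using k(2) by (simp only: of_nat_le_iff less_imp_le)
    qed (use assms(3) in simp)
    finally show ?thesis .
  qed
  then show ?thesis by blast
qed

end

theorem mainTheorem10:
  fixes M :: "'a measure" and X :: "int \<Rightarrow> 'a \<Rightarrow> 'x::finite"
    and H \<beta> \<eta> :: real
  assumes "prob_space M"
    and "\<And>i. X i \<in> measurable M (count_space UNIV)"
    and "stationary_process M X"
    and "mixing_coeff M X \<longlonglongrightarrow> 0"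
    and "summable (mixing_coeff M X)"
    and "(\<lambda>t. block_entropy M X t / (2 * real t + 1)) \<longlonglongrightarrow> H"
    and "0 < H"
    and "recurrence_coeff M X < 1"
    and "\<beta> > 0" and "\<eta> > 0"
  shows "\<forall>\<epsilon>>0. \<forall>\<^sub>F n in sequentially.
           \<forall>s t. 1 \<le> s \<and> real s \<le> \<beta> * log (real CARD('x)) (real n)
               \<and> (1 + \<eta>) / H * log (real CARD('x)) (real n) \<le> real t
               \<and> real t \<le> \<beta> * log (real CARD('x)) (real n)
             \<longrightarrow> shift_match_prob M X s t \<le> \<epsilon> / log (real CARD('x)) (real n)"
proof (cases "CARD('x) = 1")
  case True
  \<comment> \<open>Logarithms to base 1 are 0, so no shift \<open>s \<ge> 1\<close> is admissible.\<close>
  then show ?thesis by (simp add: log_def)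
next
  case False
  interpret stationary_finite_process M X
    using assms(1-3) unfolding stationary_finite_process_def stationary_finite_process_axioms_def
      finite_process_def finite_process_axioms_def by auto
  have "1 < real CARD('x)" using False by (simp add: order_less_le)
  moreover have "0 < (1 + \<eta>) / H" using assms(7,10) by simp
  moreover have "\<exists>T. \<forall>t\<ge>T. \<forall>s\<in>{1..}. shift_match_prob M X s t \<le> e / real t" if "0 < e" for e
    using shift_match_prob_le_eventually[OF assms(8,4) that] by (simp add: Ball_def)
  ultimately have "\<forall>\<epsilon>>0. \<forall>\<^sub>F n in sequentially. \<forall>s\<in>{1..}. \<forall>t.
      (1 + \<eta>) / H * log (real CARD('x)) (real n) \<le> real t \<longrightarrow> shift_match_prob M X s t \<le> \<epsilon> / log (real CARD('x)) (real n)"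
    by (rule eventually_le_divide_log)
  then show ?thesis by (auto elim!: eventually_mono)
qed

end
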